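(* Let $L$ be an atomic $0$-distributive lattice with at least three atoms. Then the metric dimension $\dim_M(G^c(L))$ is finite if and only if $G^c(L)$ is finite.
   Context: A lattice $L$ with $0$ is $0$-distributive if $a\wedge b=0$ and $a\wedge c=0$ imply $a\wedge(b\vee c)=0$; it is atomic if every nonzero element lies above an atom. $Z^*(L)=\{a\in L\setminus\{0\}:\ a\wedge b=0\text{ for some } b\neq 0\}$. $G^c(L)$ is the graph with vertex set $Z^*(L)$, distinct $a,b$ adjacent iff $a\wedge b\neq 0$ (under these hypotheses it is connected). For a connected graph $G$ and $S=\{v_1,\dots,v_k\}\subseteq V(G)$, the representation of $v$ is $D(v\mid S)=(d(v,v_1),\dots,d(v,v_k))$; $S$ is resolving if $D(u\mid S)=D(v\mid S)$ for $u,v\in V(G)\setminus S$ implies $u=v$; $\dim_M(G)$ is the minimum cardinality of a resolving set. *)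

theory Defs
  imports Main "HOL-Library.Extended_Nat"
begin

unbundle lattice_syntax

definition zero_distributive :: "'a::bounded_lattice_bot itself \<Rightarrow> bool" where
  "zero_distributive _ \<longleftrightarrow>
     (\<forall>a b c :: 'a. a \<sqinter> b = \<bottom> \<and> a \<sqinter> c = \<bottom> \<longrightarrow> a \<sqinter> (b \<squnion> c) = \<bottom>)"

definition is_atom :: "'a::bounded_lattice_bot \<Rightarrow> bool" where
  "is_atom a \<longleftrightarrow> a \<noteq> \<bottom> \<and> (\<forall>x. x \<le> a \<longrightarrow> x = \<bottom> \<or> x = a)"

definition atomic_lattice :: "'a::bounded_lattice_bot itself \<Rightarrow> bool" where
  "atomic_lattice _ \<longleftrightarrow> (\<forall>x :: 'a. x \<noteq> \<bottom> \<longrightarrow> (\<exists>a. is_atom a \<and> a \<le> x))"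

definition zero_divisors :: "'a::bounded_lattice_bot set" where
  "zero_divisors = {a. a \<noteq> \<bottom> \<and> (\<exists>b. b \<noteq> \<bottom> \<and> a \<sqinter> b = \<bottom>)}"

text \<open>Adjacency of the graph G^c(L) on vertex set zero_divisors.\<close>
definition Gc_adj :: "'a::bounded_lattice_bot \<Rightarrow> 'a \<Rightarrow> bool" where
  "Gc_adj a b \<longleftrightarrow> a \<noteq> b \<and> a \<sqinter> b \<noteq> \<bottom>"

definition edge_rel :: "'v set \<Rightarrow> ('v \<Rightarrow> 'v \<Rightarrow> bool) \<Rightarrow> ('v \<times> 'v) set" where
  "edge_rel V E = {(x, y). x \<in> V \<and> y \<in> V \<and> E x y}"

definition gdist :: "'v set \<Rightarrow> ('v \<Rightarrow> 'v \<Rightarrow> bool) \<Rightarrow> 'v \<Rightarrow> 'v \<Rightarrow> enat" where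
  "gdist V E u v = Inf {enat n | n. (u, v) \<in> (edge_rel V E) ^^ n}"

definition resolving :: "'v set \<Rightarrow> ('v \<Rightarrow> 'v \<Rightarrow> bool) \<Rightarrow> 'v set \<Rightarrow> bool" where
  "resolving V E S \<longleftrightarrow> S \<subseteq> V \<and>
     (\<forall>u \<in> V - S. \<forall>v \<in> V - S. (\<forall>s \<in> S. gdist V E u s = gdist V E v s) \<longrightarrow> u = v)"

text \<open>Metric dimension: minimum cardinality of a resolving set; \<infinity> if no finite one exists.\<close>
definition metric_dim :: "'v set \<Rightarrow> ('v \<Rightarrow> 'v \<Rightarrow> bool) \<Rightarrow> enat" where
  "metric_dim V E = Inf {enat (card S) | S. finite S \<and> resolving V E S}"

end

theory Submission
  imports Defs "HOL-Library.FuncSet"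
begin

text \<open>Any two zero divisors u, v lie above atoms p, q, and a third atom r is disjoint from
  p, q and, by 0-distributivity, from p \<squnion> q. Hence u, p, p \<squnion> q, q, v is a walk in G^c(L), so
  all distances are at most 4. A finite resolving set S then embeds the remaining vertices
  injectively into the finite set of distance vectors S \<rightarrow> {0..4}, so G^c(L) is finite;
  conversely a finite vertex set resolves itself.\<close>

lemma relpow_reflcl_imp_relpow_le:
  "(u, v) \<in> R\<^sup>= ^^ n \<Longrightarrow> \<exists>m\<le>n. (u, v) \<in> R ^^ m"
proof (induction n arbitrary: v)
  case 0
  then show ?case by auto
next
  case (Suc n)
  then obtain w where uw: "(u, w) \<in> R\<^sup>= ^^ n" and wv: "(w, v) \<in> R\<^sup>=" by auto
  from Suc.IH[OF uw] obtain m where "m \<le> n" "(u, w) \<in> R ^^ m" by blast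
  with wv show ?case
    by (metis Suc_le_mono UnE le_SucI pair_in_Id_conv relpow_Suc_I)
qed

lemma gdist_le_if_relpow_reflcl:
  assumes "(u, v) \<in> (edge_rel V E)\<^sup>= ^^ n"
  shows "gdist V E u v \<le> enat n"
proof -
  obtain m where "m \<le> n" "(u, v) \<in> edge_rel V E ^^ m"
    using relpow_reflcl_imp_relpow_le[OF assms] by blast
  then have "gdist V E u v \<le> enat m"
    unfolding gdist_def by (auto intro!: Inf_lower)
  with \<open>m \<le> n\<close> show ?thesis
    by (simp add: order_trans)
qed

lemma metric_dim_ne_infinity_iff:
  "metric_dim V E \<noteq> \<infinity> \<longleftrightarrow> (\<exists>S. finite S \<and> resolving V E S)"
proof
  assume "metric_dim V E \<noteq> \<infinity>"
  show "\<exists>S. finite S \<and> resolving V E S"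
  proof (rule ccontr)
    assume "\<nexists>S. finite S \<and> resolving V E S"
    then have "{enat (card S) | S. finite S \<and> resolving V E S} = {}"
      by blast
    then have "metric_dim V E = Inf {}"
      unfolding metric_dim_def by argo
    with \<open>metric_dim V E \<noteq> \<infinity>\<close> show False
      by (simp add: top_enat_def)
  qed
next
  assume "\<exists>S. finite S \<and> resolving V E S"
  then obtain S where "finite S" "resolving V E S" by blast
  then have "metric_dim V E \<le> enat (card S)"
    unfolding metric_dim_def by (auto intro!: Inf_lower)
  then show "metric_dim V E \<noteq> \<infinity>"
    by (metis enat_ord_simps(5) infinity_ileE)
qed

lemma resolving_vertex_set: "resolving V E V"
  unfolding resolving_def by auto

lemma finite_if_resolving_bounded_diameter:
  assumes "finite S" and "resolving V E S"
    and bounded: "\<And>u v. u \<in> V \<Longrightarrow> v \<in> V \<Longrightarrow> gdist V E u v \<le> enat k"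
  shows "finite V"
proof -
  define dist_vector where "dist_vector u = (\<lambda>s\<in>S. gdist V E u s)" for u
  have "inj_on dist_vector (V - S)"
  proof (rule inj_onI)
    fix u v assume "u \<in> V - S" "v \<in> V - S" "dist_vector u = dist_vector v"
    then show "u = v"
      using \<open>resolving V E S\<close> unfolding resolving_def dist_vector_def
      by (metis restrict_apply')
  qed
  moreover have "dist_vector ` (V - S) \<subseteq> S \<rightarrow>\<^sub>E {x. x \<le> enat k}"
    using bounded \<open>resolving V E S\<close> by (auto simp: dist_vector_def resolving_def)
  moreover have "finite (S \<rightarrow>\<^sub>E {x. x \<le> enat k})"
    using \<open>finite S\<close> by (auto intro: finite_PiE finite_enat_bounded)
  ultimately have "finite (V - S)"
    by (metis finite_imageD finite_subset)
  with \<open>finite S\<close> show ?thesis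
    by (metis finite_Diff2)
qed

lemma inf_eq_bot_if_atoms_distinct:
  fixes p q :: "'a::bounded_lattice_bot"
  assumes "is_atom p" "is_atom q" "p \<noteq> q"
  shows "p \<sqinter> q = \<bottom>"
  using assms unfolding is_atom_def by (metis inf.absorb_iff1 inf_le1)

lemma zero_divisorI:
  fixes x r :: "'a::bounded_lattice_bot"
  assumes "x \<noteq> \<bottom>" "r \<noteq> \<bottom>" "r \<sqinter> x = \<bottom>"
  shows "x \<in> zero_divisors"
  using assms unfolding zero_divisors_def by (auto simp: inf_commute)

lemma Gc_reflcl_edgeI:
  assumes "x \<in> zero_divisors" "y \<in> zero_divisors" "x \<sqinter> y \<noteq> \<bottom>"
  shows "(x, y) \<in> (edge_rel zero_divisors Gc_adj)\<^sup>="
  using assms unfolding edge_rel_def Gc_adj_def by auto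

lemma Gc_gdist_le_4:
  fixes L :: "'a::bounded_lattice_bot itself"
  assumes zd: "zero_distributive L"
    and atomic: "atomic_lattice L"
    and three: "\<exists>a b c :: 'a. is_atom a \<and> is_atom b \<and> is_atom c \<and> a \<noteq> b \<and> a \<noteq> c \<and> b \<noteq> c"
    and u: "(u::'a) \<in> zero_divisors" and v: "v \<in> zero_divisors"
  shows "gdist zero_divisors Gc_adj u v \<le> enat 4"
proof -
  let ?R = "(edge_rel zero_divisors Gc_adj)\<^sup>="
  have "u \<noteq> \<bottom>" "v \<noteq> \<bottom>" using u v unfolding zero_divisors_def by auto
  then obtain p q where p: "is_atom p" "p \<le> u" and q: "is_atom q" "q \<le> v"
    using atomic unfolding atomic_lattice_def by blast
  obtain r where r: "is_atom r" "r \<noteq> p" "r \<noteq> q"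
    using three by metis
  have rp: "r \<sqinter> p = \<bottom>" and rq: "r \<sqinter> q = \<bottom>"
    using inf_eq_bot_if_atoms_distinct p q r by blast+
  then have rpq: "r \<sqinter> (p \<squnion> q) = \<bottom>"
    using zd unfolding zero_distributive_def by blast
  have nonzero: "p \<noteq> \<bottom>" "q \<noteq> \<bottom>" "r \<noteq> \<bottom>"
    using p q r unfolding is_atom_def by auto
  have pZ: "p \<in> zero_divisors" and qZ: "q \<in> zero_divisors"
    using zero_divisorI nonzero rp rq by blast+
  have pqZ: "p \<squnion> q \<in> zero_divisors"
    using zero_divisorI[OF _ _ rpq] nonzero by (metis bot_unique sup_ge1)
  have "(u, p) \<in> ?R"
    by (rule Gc_reflcl_edgeI[OF u pZ]) (simp add: inf.absorb2 p nonzero)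
  moreover have "(p, p \<squnion> q) \<in> ?R"
    by (rule Gc_reflcl_edgeI[OF pZ pqZ]) (simp add: nonzero)
  moreover have "(p \<squnion> q, q) \<in> ?R"
    by (rule Gc_reflcl_edgeI[OF pqZ qZ]) (simp add: inf.absorb2 nonzero)
  moreover have "(q, v) \<in> ?R"
    by (rule Gc_reflcl_edgeI[OF qZ v]) (simp add: inf.absorb1 q nonzero)
  ultimately have "(u, v) \<in> ?R ^^ 4"
    unfolding numeral_eq_Suc pred_numeral_simps BitM.simps
    by (meson relpow_0_I relpow_Suc_I2)
  then show ?thesis
    by (rule gdist_le_if_relpow_reflcl)
qed

theorem lemma3p2:
  fixes L :: "'a::bounded_lattice_bot itself"
  assumes "zero_distributive L"
    and "atomic_lattice L"
    and "\<exists>a b c :: 'a. is_atom a \<and> is_atom b \<and> is_atom c \<and> a \<noteq> b \<and> a \<noteq> c \<and> b \<noteq> c"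
  shows "metric_dim (zero_divisors :: 'a set) Gc_adj \<noteq> \<infinity> \<longleftrightarrow> finite (zero_divisors :: 'a set)"
proof
  assume "metric_dim (zero_divisors :: 'a set) Gc_adj \<noteq> \<infinity>"
  then obtain S where "finite S" "resolving (zero_divisors :: 'a set) Gc_adj S"
    using metric_dim_ne_infinity_iff by blast
  then show "finite (zero_divisors :: 'a set)"
    by (rule finite_if_resolving_bounded_diameter) (rule Gc_gdist_le_4[OF assms])
next
  assume "finite (zero_divisors :: 'a set)"
  then show "metric_dim (zero_divisors :: 'a set) Gc_adj \<noteq> \<infinity>"
    using metric_dim_ne_infinity_iff resolving_vertex_set by blast
qed

end
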